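(* Let $n\ge 4$ and $k\ge 2$. There is an intersecting family $\mathcal{F}\subseteq\mathcal{I}_{n,k}^3$ with $\bigcap_{F\in\mathcal{F}}F=\emptyset$ and $|\mathcal{F}| = |\mathcal{H}_{n,k}^3|$ that is not isomorphic to $\mathcal{H}_{n,k}^3$.
   Context: $\Gamma_{n,k}$ is the disjoint union of $n$ copies of $K_k$, with vertices $(i,j)$, $i\in[n]$ the copy, $j\in[k]$ the vertex within it. $\mathcal{I}_{n,k}^r$ is the set of independent sets of size $r$ in $\Gamma_{n,k}$. A family is intersecting if every two members meet. Families are isomorphic if one is the image of the other under an automorphism of $\Gamma_{n,k}$. For $r\le n-1$, with $H=\{(2,1),\dots,(r+1,1)\}$, $\mathcal{H}_{n,k}^r = \{ F \in \mathcal{I}_{n,k}^r : (1,1)\in F,\ F \cap H \neq \emptyset \} \cup \{H\}$. *)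

theory Defs
  imports Main
begin

type_synonym vtx = "nat \<times> nat"

text \<open>Vertex set of Gamma_{n,k}: pairs (i,j) with i in [n] (copy), j in [k].\<close>
definition gverts :: "nat \<Rightarrow> nat \<Rightarrow> vtx set" where
  "gverts n k = {1..n} \<times> {1..k}"

definition gadj :: "vtx \<Rightarrow> vtx \<Rightarrow> bool" where
  "gadj u v \<longleftrightarrow> fst u = fst v \<and> u \<noteq> v"

definition indep_sets :: "nat \<Rightarrow> nat \<Rightarrow> nat \<Rightarrow> vtx set set" where
  "indep_sets n k r = {F. F \<subseteq> gverts n k \<and> card F = r \<and>
      (\<forall>u\<in>F. \<forall>v\<in>F. \<not> gadj u v)}"

definition intersecting :: "'a set set \<Rightarrow> bool" where
  "intersecting \<F> \<longleftrightarrow> (\<forall>A\<in>\<F>. \<forall>B\<in>\<F>. A \<inter> B \<noteq> {})"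

definition graph_aut :: "nat \<Rightarrow> nat \<Rightarrow> (vtx \<Rightarrow> vtx) \<Rightarrow> bool" where
  "graph_aut n k \<sigma> \<longleftrightarrow> bij_betw \<sigma> (gverts n k) (gverts n k) \<and>
      (\<forall>u\<in>gverts n k. \<forall>v\<in>gverts n k. gadj u v \<longleftrightarrow> gadj (\<sigma> u) (\<sigma> v))"

definition fam_iso :: "nat \<Rightarrow> nat \<Rightarrow> vtx set set \<Rightarrow> vtx set set \<Rightarrow> bool" where
  "fam_iso n k \<F> \<G> \<longleftrightarrow> (\<exists>\<sigma>. graph_aut n k \<sigma> \<and> (\<lambda>F. \<sigma> ` F) ` \<F> = \<G>)"

definition Hset :: "nat \<Rightarrow> vtx set" where
  "Hset r = (\<lambda>i. (i, 1)) ` {2..r+1}"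

definition Hfam :: "nat \<Rightarrow> nat \<Rightarrow> nat \<Rightarrow> vtx set set" where
  "Hfam n k r = {F \<in> indep_sets n k r. (1,1) \<in> F \<and> F \<inter> Hset r \<noteq> {}} \<union> {Hset r}"

end

theory Submission
  imports Defs "HOL-Combinatorics.Permutations"
begin

(* Let G be the family of independent 3-sets containing at least two of the vertices
   T123 = {(1,1), (2,1), (3,1)}; G is intersecting because two such sets share a vertex of T123.
   G and H^3_{n,k} differ only in the sets containing (1,1), (4,1) but neither (2,1) nor (3,1)
   (which lie in H only) and the sets containing (2,1), (3,1) but neither (1,1) nor (4,1)
   (which lie in G only); the automorphism exchanging the copies 1, 2 and the copies 3, 4 swaps
   these two classes, so |G| = |H^3_{n,k}|. Every vertex is avoided by at least two members of
   G, while (1,1) is avoided by exactly one member of H^3_{n,k}, namely H; so the families are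
   not isomorphic, and G has empty intersection. *)

abbreviation T123 :: "vtx set" where
  "T123 \<equiv> {(1,1), (2,1), (3,1)}"

definition majority_fam :: "nat \<Rightarrow> nat \<Rightarrow> nat \<Rightarrow> vtx set \<Rightarrow> vtx set set" where
  "majority_fam n k r T = {F \<in> indep_sets n k r. card T < 2 * card (F \<inter> T)}"

lemma finite_indep_sets: "finite (indep_sets n k r)"
proof (rule finite_subset)
  show "indep_sets n k r \<subseteq> Pow (gverts n k)"
    by (auto simp: indep_sets_def)
qed (simp add: gverts_def)

lemma triple_in_indep_sets:
  assumes "fst x \<noteq> fst y" "fst x \<noteq> fst z" "fst y \<noteq> fst z"
    and "x \<in> gverts n k" "y \<in> gverts n k" "z \<in> gverts n k"
  shows "{x, y, z} \<in> indep_sets n k 3"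
proof -
  have "x \<noteq> y" "x \<noteq> z" "y \<noteq> z"
    using assms(1-3) by auto
  then show ?thesis
    using assms by (auto simp: indep_sets_def gadj_def)
qed

lemma indep_sets_image:
  assumes "graph_aut n k \<sigma>" "F \<in> indep_sets n k r"
  shows "\<sigma> ` F \<in> indep_sets n k r"
proof -
  have bij: "bij_betw \<sigma> (gverts n k) (gverts n k)"
    and adj: "\<forall>u\<in>gverts n k. \<forall>v\<in>gverts n k. gadj u v \<longleftrightarrow> gadj (\<sigma> u) (\<sigma> v)"
    using assms(1) by (auto simp: graph_aut_def)
  have F: "F \<subseteq> gverts n k" "card F = r" "\<forall>u\<in>F. \<forall>v\<in>F. \<not> gadj u v"
    using assms(2) by (auto simp: indep_sets_def)
  have "\<sigma> ` F \<subseteq> gverts n k"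
    using F(1) bij by (auto simp: bij_betw_def)
  moreover have "card (\<sigma> ` F) = r"
    using F(1,2) bij by (metis bij_betw_def card_image inj_on_subset)
  moreover have "\<forall>u\<in>\<sigma> ` F. \<forall>v\<in>\<sigma> ` F. \<not> gadj u v"
    using F adj by blast
  ultimately show ?thesis
    by (simp add: indep_sets_def)
qed

lemma graph_aut_map_prod:
  assumes "p permutes {1..n}"
  shows "graph_aut n k (map_prod p id)"
  unfolding graph_aut_def gverts_def
proof
  show "bij_betw (map_prod p id) ({1..n} \<times> {1..k}) ({1..n} \<times> {1..k})"
    using assms by (intro bij_betw_map_prod permutes_imp_bij) simp_all
  show "\<forall>u\<in>{1..n} \<times> {1..k}. \<forall>v\<in>{1..n} \<times> {1..k}. gadj u v \<longleftrightarrow> gadj (map_prod p id u) (map_prod p id v)"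
    using permutes_inj[OF assms] by (auto simp: gadj_def map_prod_def inj_eq split: prod.splits)
qed

lemma majority_subsets_intersect:
  assumes "finite T" "card T < 2 * card (A \<inter> T)" "card T < 2 * card (B \<inter> T)"
  shows "A \<inter> B \<noteq> {}"
proof
  assume "A \<inter> B = {}"
  then have "card (A \<inter> T) + card (B \<inter> T) = card (A \<inter> T \<union> B \<inter> T)"
    using assms(1) by (subst card_Un_disjoint) auto
  also have "\<dots> \<le> card T"
    using assms(1) by (intro card_mono) auto
  finally show False
    using assms(2,3) by linarith
qed

lemma intersecting_majority_fam: "finite T \<Longrightarrow> intersecting (majority_fam n k r T)"
  unfolding intersecting_def majority_fam_def using majority_subsets_intersect by blast

lemma fam_iso_card_avoiding:
  assumes "fam_iso n k \<F> \<G>" "\<forall>F\<in>\<F>. F \<subseteq> gverts n k" "v \<in> gverts n k"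
  shows "\<exists>u\<in>gverts n k. card {F \<in> \<F>. u \<notin> F} = card {G \<in> \<G>. v \<notin> G}"
proof -
  obtain \<sigma> where bij: "bij_betw \<sigma> (gverts n k) (gverts n k)"
    and img: "(\<lambda>F. \<sigma> ` F) ` \<F> = \<G>"
    using assms(1) by (auto simp: fam_iso_def graph_aut_def)
  then have inj: "inj_on \<sigma> (gverts n k)"
    by (simp add: bij_betw_def)
  obtain u where u: "u \<in> gverts n k" "v = \<sigma> u"
    using assms(3) bij_betw_imp_surj_on[OF bij] by blast
  have avoid: "v \<in> \<sigma> ` F \<longleftrightarrow> u \<in> F" if "F \<in> \<F>" for F
    using inj_on_image_mem_iff[OF inj u(1), of F] assms(2) that u(2) by simp
  have "{G \<in> \<G>. v \<notin> G} = (\<lambda>F. \<sigma> ` F) ` {F \<in> \<F>. v \<notin> \<sigma> ` F}"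
    unfolding img[symmetric] by blast
  also have "{F \<in> \<F>. v \<notin> \<sigma> ` F} = {F \<in> \<F>. u \<notin> F}"
    using avoid by blast
  finally have "{G \<in> \<G>. v \<notin> G} = (\<lambda>F. \<sigma> ` F) ` {F \<in> \<F>. u \<notin> F}" .
  moreover have "inj_on (\<lambda>F. \<sigma> ` F) {F \<in> \<F>. u \<notin> F}"
    using assms(2) by (intro inj_on_image inj_on_subset[OF inj]) blast
  ultimately have "card {G \<in> \<G>. v \<notin> G} = card {F \<in> \<F>. u \<notin> F}"
    by (simp add: card_image)
  with u(1) show ?thesis
    by auto
qed

lemma not_fam_iso_avoiding:
  assumes "\<forall>F\<in>\<F>. F \<subseteq> gverts n k"
    and "\<And>u. \<exists>A\<in>\<F>. \<exists>B\<in>\<F>. A \<noteq> B \<and> u \<notin> A \<and> u \<notin> B"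
    and "v \<in> gverts n k" "card {G \<in> \<G>. v \<notin> G} = 1"
  shows "\<not> fam_iso n k \<F> \<G>"
proof
  assume "fam_iso n k \<F> \<G>"
  then obtain u where "card {F \<in> \<F>. u \<notin> F} = card {G \<in> \<G>. v \<notin> G}"
    using fam_iso_card_avoiding[OF _ assms(1,3)] by blast
  then obtain A where A: "{F \<in> \<F>. u \<notin> F} = {A}"
    using assms(4) card_1_singletonE by metis
  obtain B C where "B \<in> \<F>" "C \<in> \<F>" "B \<noteq> C" "u \<notin> B" "u \<notin> C"
    using assms(2)[of u] by blast
  then have "B \<in> {A}" "C \<in> {A}"
    unfolding A[symmetric] by simp_all
  with \<open>B \<noteq> C\<close> show False
    by simp
qed

lemma card_indep_sets_swapped:
  assumes "graph_aut n k \<sigma>" "inj \<sigma>" "\<sigma> a = b" "\<sigma> b = a" "\<sigma> c = d" "\<sigma> d = c"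
  shows "card {F \<in> indep_sets n k r. a \<in> F \<and> c \<in> F \<and> b \<notin> F \<and> d \<notin> F} =
         card {F \<in> indep_sets n k r. b \<in> F \<and> d \<in> F \<and> a \<notin> F \<and> c \<notin> F}"
proof -
  have maps: "(\<lambda>F. \<sigma> ` F) ` {F \<in> indep_sets n k r. x \<in> F \<and> y \<in> F \<and> z \<notin> F \<and> w \<notin> F}
      \<subseteq> {F \<in> indep_sets n k r. z \<in> F \<and> w \<in> F \<and> x \<notin> F \<and> y \<notin> F}"
    if "\<sigma> x = z" "\<sigma> z = x" "\<sigma> y = w" "\<sigma> w = y" for x y z w
  proof clarify
    fix F assume "F \<in> indep_sets n k r" "x \<in> F" "y \<in> F" "z \<notin> F" "w \<notin> F"
    moreover have "v \<in> \<sigma> ` F \<longleftrightarrow> \<sigma> v \<in> F" if "\<sigma> (\<sigma> v) = v" for v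
      using that inj_image_mem_iff[OF assms(2)] by metis
    ultimately show "\<sigma> ` F \<in> indep_sets n k r \<and> z \<in> \<sigma> ` F \<and> w \<in> \<sigma> ` F \<and> x \<notin> \<sigma> ` F \<and> y \<notin> \<sigma> ` F"
      using indep_sets_image[OF assms(1)] \<open>\<sigma> x = z\<close> \<open>\<sigma> z = x\<close> \<open>\<sigma> y = w\<close> \<open>\<sigma> w = y\<close>
      by auto
  qed
  have inj: "inj_on (\<lambda>F. \<sigma> ` F) X" for X :: "vtx set set"
    using assms(2) by (intro inj_on_image) (auto intro: inj_on_subset)
  have fin: "finite {F \<in> indep_sets n k r. P F}" for P
    using finite_indep_sets by simp
  show ?thesis
    using card_inj_on_le[OF inj maps[of a b c d] fin] card_inj_on_le[OF inj maps[of b a d c] fin]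
      assms(3-6) by simp
qed

lemma two_le_card_Int_triple:
  assumes "distinct [a, b, c]"
  shows "2 \<le> card (F \<inter> {a, b, c}) \<longleftrightarrow> a \<in> F \<and> b \<in> F \<or> a \<in> F \<and> c \<in> F \<or> b \<in> F \<and> c \<in> F"
  using assms by (cases "a \<in> F"; cases "b \<in> F"; cases "c \<in> F") (simp_all add: Int_insert_right)

lemma majority_T123_eq:
  "majority_fam n k r T123 = {F \<in> indep_sets n k r.
     (1,1) \<in> F \<and> (2,1) \<in> F \<or> (1,1) \<in> F \<and> (3,1) \<in> F \<or> (2,1) \<in> F \<and> (3,1) \<in> F}"
proof -
  have "distinct [(1::nat, 1::nat), (2,1), (3,1)]"
    by simp
  note two = two_le_card_Int_triple[OF this]
  have "card T123 = 3"
    by simp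
  then have "card T123 < 2 * card (F \<inter> T123) \<longleftrightarrow> 2 \<le> card (F \<inter> T123)" for F
    by arith
  then show ?thesis
    unfolding majority_fam_def two by blast
qed

lemma Hset_3: "Hset 3 = {(2,1), (3,1), (4,1)}"
proof -
  have "{2..3+1::nat} = {2,3,4}"
    by auto
  then show ?thesis
    by (simp add: Hset_def)
qed

lemma Hfam_avoiding_1_1: "{G \<in> Hfam n k r. (1,1) \<notin> G} = {Hset r}"
  by (auto simp: Hfam_def Hset_def)

lemma Hset_3_in_indep_sets: "4 \<le> n \<Longrightarrow> 1 \<le> k \<Longrightarrow> Hset 3 \<in> indep_sets n k 3"
  unfolding Hset_3 by (intro triple_in_indep_sets) (auto simp: gverts_def)

lemma Hfam_diff_majority_T123:
  assumes "4 \<le> n" "1 \<le> k"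
  shows "Hfam n k 3 - majority_fam n k 3 T123 =
    {F \<in> indep_sets n k 3. (1,1) \<in> F \<and> (4,1) \<in> F \<and> (2,1) \<notin> F \<and> (3,1) \<notin> F}"
  using Hset_3_in_indep_sets[OF assms]
  unfolding Hfam_def Hset_3 majority_T123_eq by auto

lemma majority_T123_diff_Hfam:
  "majority_fam n k 3 T123 - Hfam n k 3 =
    {F \<in> indep_sets n k 3. (2,1) \<in> F \<and> (3,1) \<in> F \<and> (1,1) \<notin> F \<and> (4,1) \<notin> F}"
proof -
  have "F = Hset 3" if "F \<in> indep_sets n k 3" "(2,1) \<in> F" "(3,1) \<in> F" "(4,1) \<in> F" for F
    using that by (intro card_subset_eq[symmetric]) (auto simp: indep_sets_def Hset_3 intro: card_ge_0_finite)
  then show ?thesis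
    unfolding Hfam_def Hset_3 majority_T123_eq by auto
qed

lemma card_majority_T123:
  assumes "4 \<le> n" "1 \<le> k"
  shows "card (majority_fam n k 3 T123) = card (Hfam n k 3)"
proof -
  define \<G> where "\<G> = majority_fam n k 3 T123"
  define \<pi> :: "vtx \<Rightarrow> vtx"
    where "\<pi> = map_prod (Transposition.transpose 1 2 \<circ> Transposition.transpose 3 4) id"
  have p: "Transposition.transpose 1 2 \<circ> Transposition.transpose 3 4 permutes {1..n}"
    using assms(1) by (intro permutes_compose permutes_swap_id) auto
  have "graph_aut n k \<pi>"
    unfolding \<pi>_def using p by (rule graph_aut_map_prod)
  moreover have "inj \<pi>"
    unfolding \<pi>_def by (rule prod.inj_map[OF permutes_inj[OF p] inj_on_id])
  ultimately have "card (Hfam n k 3 - \<G>) = card (\<G> - Hfam n k 3)"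
    unfolding \<G>_def Hfam_diff_majority_T123[OF assms] majority_T123_diff_Hfam
    by (rule card_indep_sets_swapped) (simp_all add: \<pi>_def)
  moreover have "finite \<G>" "finite (Hfam n k 3)"
    using Hset_3_in_indep_sets[OF assms]
    by (auto simp: \<G>_def majority_fam_def Hfam_def intro: finite_subset[OF _ finite_indep_sets])
  ultimately show ?thesis
    unfolding \<G>_def[symmetric] using card_Int_Diff by (metis Int_commute)
qed

lemma majority_T123_avoiding_pair:
  assumes "4 \<le> n" "2 \<le> k"
  shows "\<exists>A \<in> majority_fam n k 3 T123. \<exists>B \<in> majority_fam n k 3 T123.
           A \<noteq> B \<and> u \<notin> A \<and> u \<notin> B"
proof -
  have mem: "{(i1,1), (i2,1), (4,j)} \<in> majority_fam n k 3 T123"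
    if "i1 \<in> {1,2,3}" "i2 \<in> {1,2,3}" "i1 \<noteq> i2" "j \<in> {1,2}" for i1 i2 j
  proof -
    have "{(i1,1), (i2,1), (4,j)} \<in> indep_sets n k 3"
      using that assms by (intro triple_in_indep_sets) (auto simp: gverts_def)
    then show ?thesis
      using that unfolding majority_T123_eq by auto
  qed
  have pair: "\<exists>A \<in> majority_fam n k 3 T123. \<exists>B \<in> majority_fam n k 3 T123.
           A \<noteq> B \<and> u \<notin> A \<and> u \<notin> B"
    if "A \<in> majority_fam n k 3 T123" "B \<in> majority_fam n k 3 T123"
      "w \<in> A" "w \<notin> B" "u \<notin> A" "u \<notin> B" for A B w
    using that by blast
  consider "u = (1,1)" | "u = (2,1)" | "u = (3,1)" | "u = (4,1)" | "u \<notin> {(1,1), (2,1), (3,1), (4,1)}"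
    by blast
  then show ?thesis
  proof cases
    case 1
    show ?thesis by (rule pair[OF mem[of 2 3 1] mem[of 2 3 2], of "(4,1)"]) (simp_all add: 1)
  next
    case 2
    show ?thesis by (rule pair[OF mem[of 1 3 1] mem[of 1 3 2], of "(4,1)"]) (simp_all add: 2)
  next
    case 3
    show ?thesis by (rule pair[OF mem[of 1 2 1] mem[of 1 2 2], of "(4,1)"]) (simp_all add: 3)
  next
    case 4
    show ?thesis by (rule pair[OF mem[of 1 2 2] mem[of 1 3 2], of "(2,1)"]) (simp_all add: 4)
  next
    case 5
    show ?thesis by (rule pair[OF mem[of 1 2 1] mem[of 1 3 1], of "(2,1)"]) (use 5 in auto)
  qed
qed

theorem lemma3p2:
  fixes n k :: nat
  assumes "n \<ge> 4" and "k \<ge> 2"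
  shows "\<exists>\<F>. \<F> \<subseteq> indep_sets n k 3 \<and> intersecting \<F> \<and> \<Inter>\<F> = {} \<and>
            card \<F> = card (Hfam n k 3) \<and> \<not> fam_iso n k \<F> (Hfam n k 3)"
proof -
  define \<G> where "\<G> = majority_fam n k 3 T123"
  have avoiders: "\<exists>A\<in>\<G>. \<exists>B\<in>\<G>. A \<noteq> B \<and> u \<notin> A \<and> u \<notin> B" for u
    unfolding \<G>_def using assms by (rule majority_T123_avoiding_pair)
  have sub: "\<G> \<subseteq> indep_sets n k 3"
    by (auto simp: \<G>_def majority_fam_def)
  moreover have "intersecting \<G>"
    unfolding \<G>_def by (rule intersecting_majority_fam) simp
  moreover have "\<Inter>\<G> = {}"
  proof -
    have "u \<notin> \<Inter>\<G>" for u
      using avoiders[of u] by blast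
    then show ?thesis
      by blast
  qed
  moreover have "card \<G> = card (Hfam n k 3)"
    unfolding \<G>_def using assms by (intro card_majority_T123) simp_all
  moreover have "\<not> fam_iso n k \<G> (Hfam n k 3)"
  proof (rule not_fam_iso_avoiding[OF _ avoiders])
    show "\<forall>F\<in>\<G>. F \<subseteq> gverts n k" "(1,1) \<in> gverts n k"
      using sub assms by (auto simp: indep_sets_def gverts_def)
    show "card {G \<in> Hfam n k 3. (1,1) \<notin> G} = 1"
      unfolding Hfam_avoiding_1_1 by simp
  qed
  ultimately show ?thesis
    by blast
qed

end
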